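(* Under assumptions (A1)–(A6), for (almost) every $x$, $$\alpha(x)=\Big(1-\frac{\mu_{10}(x)}{\mu_{11}(x)}\Big)\Big(1-\frac{\gamma_0(x)}{\gamma_1(x)}\Big)P(M=1\mid A=1,Y=1,X=x),$$ $$\beta(x)=\Big(1-\frac{\mu_0(x)}{\mu_1(x)}\Big)-\alpha(x),$$ where $\mu_a(x)=P(Y=1\mid A=a,X=x)$.
   Context: Observed data $O=(X,A,M,Y)$ with covariates $X\in\mathbb{R}^d$, binary exposure $A$, binary mediator $M$, binary outcome $Y$. For $a,m\in\{0,1\}$, $Y(a,m)$ is the potential outcome under $A=a,M=m$, $M(a)$ the potential mediator, $Y(a):=Y(a,M(a))$, cross-world $Y(a,M(a'))$ by substitution, all on a common probability space with $O$. $\mu_{am}(x)=P(Y=1\mid A=a,M=m,X=x)$, $\gamma_a(x)=P(M=1\mid A=a,X=x)$. Total probabilities of indirect and direct causation: $\alpha(x)=P(Y(1,M(0))=0,\,Y(0,M(0))=0\mid Y(1,M(1))=1,X=x)$ and $\beta(x)=P(Y(1,M(0))=1,\,Y(0,M(0))=0\mid Y(1,M(1))=1,X=x)$. Assumptions: (A1) $A=a,M=m\Rightarrow Y=Y(a,m)$ and $A=a\Rightarrow M=M(a)$. (A2) $Y(1,1)\ge Y(1,0)\ge Y(0,0)$, $Y(1,1)\ge Y(0,1)$, $M(1)\ge M(0)$. (A3) $A\perp\{Y(1,1),Y(1,0),Y(0,1),Y(0,0),M(1),M(0)\}\mid X$. (A4) $\{Y(1,1),Y(1,0),Y(0,1),Y(0,0)\}\perp\{M(1),M(0)\}\mid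 X$. (A5) for some $\epsilon>0$, $P\{\min_{a,m}P(A=a,M=m\mid X)\ge\epsilon\}=1$. (A6) $P\{P(Y=1\mid A=1,M=1,X)\ge\epsilon\}=1$. *)

theory Defs
  imports "HOL-Probability.Probability"
begin

definition ev :: "'a measure \<Rightarrow> ('a \<Rightarrow> bool) \<Rightarrow> 'a set" where
  "ev M P = {\<omega> \<in> space M. P \<omega>}"

text \<open>Conditional probability of an event given the covariate X, i.e. the
 conditional expectation of its indicator w.r.t. sigma(X), evaluated at outcome w
 (a version of x \<mapsto> P(E | X = x) composed with X).\<close>
definition cprob :: "'a measure \<Rightarrow> ('a \<Rightarrow> 'x::topological_space) \<Rightarrow> 'a set \<Rightarrow> 'a \<Rightarrow> real" where
  "cprob M X E = real_cond_exp M (vimage_algebra (space M) X borel) (indicator E)"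

definition cprob_given :: "'a measure \<Rightarrow> ('a \<Rightarrow> 'x::topological_space) \<Rightarrow> 'a set \<Rightarrow> 'a set \<Rightarrow> 'a \<Rightarrow> real" where
  "cprob_given M X E B \<omega> = cprob M X (E \<inter> B) \<omega> / cprob M X B \<omega>"

definition cond_indep :: "'a measure \<Rightarrow> ('a \<Rightarrow> 'x::topological_space) \<Rightarrow> ('a \<Rightarrow> 'u) \<Rightarrow> ('a \<Rightarrow> 'v) \<Rightarrow> bool" where
  "cond_indep M X U V \<longleftrightarrow>
     (\<forall>S T. AE \<omega> in M. cprob M X (ev M (\<lambda>w. U w \<in> S) \<inter> ev M (\<lambda>w. V w \<in> T)) \<omega>
               = cprob M X (ev M (\<lambda>w. U w \<in> S)) \<omega> * cprob M X (ev M (\<lambda>w. V w \<in> T)) \<omega>)"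

end

theory Submission imports Defs begin

text \<open>
  Conditionally on \<open>X\<close>, consistency and ignorability (A1, A3) turn every observed conditional
  probability inside a treatment arm into a probability of potential outcomes:
  \<open>\<mu>\<^sub>1\<^sub>m = P(Y(1,m) = 1 | X)\<close>, \<open>\<gamma>\<^sub>a = P(M(a) = 1 | X)\<close>, \<open>\<mu>\<^sub>a = P(Y(a) = 1 | X)\<close>, with
  (A4) factorizing \<open>P(Y(1,1) = 1, M(1) = 1 | X)\<close>; positivity (A5, A6) keeps every denominator nonzero.
  By monotonicity (A2), indirect causation happens exactly when \<open>M(1) = 1, M(0) = 0,
  Y(1,1) = 1, Y(1,0) = 0\<close>, an event of probability \<open>(\<mu>\<^sub>1\<^sub>1 - \<mu>\<^sub>1\<^sub>0)(\<gamma>\<^sub>1 - \<gamma>\<^sub>0)\<close> by (A4);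
  dividing by \<open>\<mu>\<^sub>1\<close> gives \<open>\<alpha>\<close>. Monotonicity also splits \<open>{Y(1) = 1}\<close> disjointly into indirect
  causation, direct causation and \<open>{Y(0) = 1}\<close>, which gives \<open>\<beta>\<close>.
\<close>

lemma ev_conj: "ev M P \<inter> ev M Q = ev M (\<lambda>w. P w \<and> Q w)"
  by (auto simp: ev_def)

lemma ev_cong: "(\<And>w. w \<in> space M \<Longrightarrow> P w = Q w) \<Longrightarrow> ev M P = ev M Q"
  by (auto simp: ev_def)

lemma sets_ev: "P \<in> measurable M (count_space UNIV) \<Longrightarrow> ev M P \<in> sets M"
  unfolding ev_def by (rule predE)

lemma bool_fun_cases: "f m \<longleftrightarrow> m \<and> f True \<or> \<not> m \<and> f False"
  by (cases m) auto

lemma mediation_formula_algebra: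
  fixes y11 y10 m1 m0 e d t1 t0 s b :: real
  assumes "y11 > 0" "m1 > 0" "t1 \<ge> y11 * m1"
    and "y11 = e + y10" "m1 = d + m0" "t1 = e * d + s" "s = b + t0"
  shows "e * d / t1 = (1 - y10 / y11) * (1 - m0 / m1) * (y11 * m1 / t1)"
    and "b / t1 = (1 - t0 / t1) - e * d / t1"
proof -
  have "1 - y10 / y11 = e / y11" "1 - m0 / m1 = d / m1"
    using assms(1,2,4,5) by (simp_all add: field_simps)
  then show "e * d / t1 = (1 - y10 / y11) * (1 - m0 / m1) * (y11 * m1 / t1)"
    using assms(1,2) by simp
  have "t1 > 0"
    using assms(1-3) by (smt (verit) mult_pos_pos)
  then have "(1 - t0 / t1) - e * d / t1 = (t1 - t0 - e * d) / t1"
    by (simp add: diff_divide_distrib)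
  then show "b / t1 = (1 - t0 / t1) - e * d / t1"
    using assms(6,7) by simp
qed

context prob_space
begin

lemma sigma_finite_subalgebra_vimage_borel:
  assumes "X \<in> borel_measurable M"
  shows "sigma_finite_subalgebra M (vimage_algebra (space M) X borel)"
  by (rule finite_measure_subalgebra_is_sigma_finite, unfold_locales)
    (use assms in \<open>auto simp: subalgebra_def sets_vimage_algebra2\<close>)

lemma cprob_nonneg:
  assumes "X \<in> borel_measurable M" "E \<in> sets M"
  shows "AE \<omega> in M. cprob M X E \<omega> \<ge> 0"
proof -
  interpret sigma_finite_subalgebra M "vimage_algebra (space M) X borel"
    using assms(1) by (rule sigma_finite_subalgebra_vimage_borel)
  show ?thesis
    unfolding cprob_def by (rule real_cond_exp_pos) (use assms in auto)
qed

lemma cprob_space: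
  assumes "X \<in> borel_measurable M"
  shows "AE \<omega> in M. cprob M X (space M) \<omega> = 1"
proof -
  interpret sigma_finite_subalgebra M "vimage_algebra (space M) X borel"
    using assms by (rule sigma_finite_subalgebra_vimage_borel)
  have "indicator (space M) \<in> borel_measurable (vimage_algebra (space M) X borel)"
    by (metis borel_measurable_indicator sets.top space_vimage_algebra)
  then have "AE \<omega> in M. cprob M X (space M) \<omega> = indicator (space M) \<omega>"
    unfolding cprob_def
    by (intro real_cond_exp_F_meas integrable_real_indicator) (auto simp: less_top[symmetric])
  then show ?thesis
    by (rule AE_mp) auto
qed

lemma cprob_disjoint_union:
  assumes "X \<in> borel_measurable M" "E \<in> sets M" "F \<in> sets M" "E \<inter> F = {}"
  shows "AE \<omega> in M. cprob M X (E \<union> F) \<omega> = cprob M X E \<omega> + cprob M X F \<omega>"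
proof -
  interpret sigma_finite_subalgebra M "vimage_algebra (space M) X borel"
    using assms(1) by (rule sigma_finite_subalgebra_vimage_borel)
  have "indicator (E \<union> F) = (\<lambda>\<omega>. indicator E \<omega> + indicator F \<omega> :: real)"
    using indicator_disj_union[OF assms(4)] by auto
  then show ?thesis
    unfolding cprob_def
    by (simp add: real_cond_exp_add assms less_top[symmetric])
qed

end

lemma cond_indep_ev_conj:
  assumes "cond_indep M X U V"
  shows "AE \<omega> in M. cprob M X (ev M (\<lambda>w. P (U w) \<and> Q (V w))) \<omega>
     = cprob M X (ev M (\<lambda>w. P (U w))) \<omega> * cprob M X (ev M (\<lambda>w. Q (V w))) \<omega>"
proof -
  have "AE \<omega> in M. cprob M X (ev M (\<lambda>w. U w \<in> Collect P) \<inter> ev M (\<lambda>w. V w \<in> Collect Q)) \<omega>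
     = cprob M X (ev M (\<lambda>w. U w \<in> Collect P)) \<omega> * cprob M X (ev M (\<lambda>w. V w \<in> Collect Q)) \<omega>"
    using assms unfolding cond_indep_def by blast
  then show ?thesis
    by (simp add: ev_conj)
qed

locale mediation_model = prob_space M
  for M :: "'a measure" and X :: "'a \<Rightarrow> 'x::topological_space"
    and A Mo Y :: "'a \<Rightarrow> bool"
    and Yp :: "bool \<Rightarrow> bool \<Rightarrow> 'a \<Rightarrow> bool" and Mp :: "bool \<Rightarrow> 'a \<Rightarrow> bool" +
  assumes meas_X: "X \<in> borel_measurable M"
    and meas_A [measurable]: "A \<in> measurable M (count_space UNIV)"
    and meas_Mo [measurable]: "Mo \<in> measurable M (count_space UNIV)"
    and meas_Y [measurable]: "Y \<in> measurable M (count_space UNIV)"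
    and meas_Yp [measurable]: "\<And>a m. Yp a m \<in> measurable M (count_space UNIV)"
    and meas_Mp [measurable]: "\<And>a. Mp a \<in> measurable M (count_space UNIV)"
    and consistency_Y: "\<And>\<omega> a m. \<omega> \<in> space M \<Longrightarrow> A \<omega> = a \<Longrightarrow> Mo \<omega> = m \<Longrightarrow> Y \<omega> = Yp a m \<omega>"
    and consistency_M: "\<And>\<omega> a. \<omega> \<in> space M \<Longrightarrow> A \<omega> = a \<Longrightarrow> Mo \<omega> = Mp a \<omega>"
    and monotone: "\<And>\<omega>. \<omega> \<in> space M \<Longrightarrow>
               Yp True False \<omega> \<le> Yp True True \<omega> \<and> Yp False False \<omega> \<le> Yp True False \<omega>
             \<and> Yp False True \<omega> \<le> Yp True True \<omega> \<and> Mp False \<omega> \<le> Mp True \<omega>"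
    and treatment_indep: "cond_indep M X A
               (\<lambda>\<omega>. (Yp True True \<omega>, Yp True False \<omega>, Yp False True \<omega>, Yp False False \<omega>,
                      Mp True \<omega>, Mp False \<omega>))"
    and mediator_indep: "cond_indep M X
               (\<lambda>\<omega>. (Yp True True \<omega>, Yp True False \<omega>, Yp False True \<omega>, Yp False False \<omega>))
               (\<lambda>\<omega>. (Mp True \<omega>, Mp False \<omega>))"
begin

abbreviation cP :: "('a \<Rightarrow> bool) \<Rightarrow> 'a \<Rightarrow> real" where
  "cP P \<equiv> cprob M X (ev M P)"

abbreviation potential :: "'a \<Rightarrow> bool \<times> bool \<times> bool \<times> bool \<times> bool \<times> bool" where
  "potential \<omega> \<equiv> (Yp True True \<omega>, Yp True False \<omega>, Yp False True \<omega>, Yp False False \<omega>,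
                  Mp True \<omega>, Mp False \<omega>)"

lemma observed_eq_potential:
  assumes "\<omega> \<in> space M"
  shows "Mo \<omega> = Mp (A \<omega>) \<omega>"
    and "Y \<omega> \<longleftrightarrow> Mp (A \<omega>) \<omega> \<and> Yp (A \<omega>) True \<omega> \<or> \<not> Mp (A \<omega>) \<omega> \<and> Yp (A \<omega>) False \<omega>"
  using consistency_M[OF assms refl] consistency_Y[OF assms refl refl]
    bool_fun_cases[of "\<lambda>m. Yp (A \<omega>) m \<omega>" "Mp (A \<omega>) \<omega>"] by simp_all

lemma Yp_Mp_cases:
  "Yp a (Mp b \<omega>) \<omega> \<longleftrightarrow> Mp b \<omega> \<and> Yp a True \<omega> \<or> \<not> Mp b \<omega> \<and> Yp a False \<omega>"
  by (rule bool_fun_cases)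

definition Y1 :: "'a \<Rightarrow> bool" where "Y1 \<omega> \<longleftrightarrow> Yp True (Mp True \<omega>) \<omega>"
definition Y0 :: "'a \<Rightarrow> bool" where "Y0 \<omega> \<longleftrightarrow> Yp False (Mp False \<omega>) \<omega>"
definition Y1M0 :: "'a \<Rightarrow> bool" where "Y1M0 \<omega> \<longleftrightarrow> Yp True (Mp False \<omega>) \<omega>"

lemma ev_Y1: "ev M Y1 = ev M (\<lambda>w. Mp True w \<and> Yp True True w \<or> \<not> Mp True w \<and> Yp True False w)"
  by (rule ev_cong) (simp add: Y1_def Yp_Mp_cases)

lemma ev_Y0: "ev M Y0 = ev M (\<lambda>w. Mp False w \<and> Yp False True w \<or> \<not> Mp False w \<and> Yp False False w)"
  by (rule ev_cong) (simp add: Y0_def Yp_Mp_cases)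

lemma measurable_potential_outcomes [measurable]:
  "Y1 \<in> measurable M (count_space UNIV)" "Y0 \<in> measurable M (count_space UNIV)"
  "Y1M0 \<in> measurable M (count_space UNIV)"
  unfolding Y1_def Y0_def Y1M0_def Yp_Mp_cases by measurable

lemma cP_nonneg: "P \<in> measurable M (count_space UNIV) \<Longrightarrow> AE \<omega> in M. cP P \<omega> \<ge> 0"
  by (intro cprob_nonneg meas_X sets_ev)

lemma cP_disjoint:
  assumes "P \<in> measurable M (count_space UNIV)" "Q \<in> measurable M (count_space UNIV)"
    and "\<And>\<omega>. \<omega> \<in> space M \<Longrightarrow> R \<omega> \<longleftrightarrow> P \<omega> \<or> Q \<omega>"
    and "\<And>\<omega>. \<omega> \<in> space M \<Longrightarrow> \<not> (P \<omega> \<and> Q \<omega>)"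
  shows "AE \<omega> in M. cP R \<omega> = cP P \<omega> + cP Q \<omega>"
proof -
  have "ev M R = ev M P \<union> ev M Q" "ev M P \<inter> ev M Q = {}"
    using assms(3,4) by (auto simp: ev_def)
  then show ?thesis
    using cprob_disjoint_union[OF meas_X sets_ev[OF assms(1)] sets_ev[OF assms(2)]] by simp
qed

lemma cP_arm_factorizes:
  "AE \<omega> in M. cP (\<lambda>w. A w = a \<and> R (potential w)) \<omega>
     = cP (\<lambda>w. A w = a) \<omega> * cP (\<lambda>w. R (potential w)) \<omega>"
  using cond_indep_ev_conj[OF treatment_indep, of "\<lambda>b. b = a" R] by simp

lemma cP_mediator_factorizes:
  "AE \<omega> in M. cP (\<lambda>w. F (Yp True True w, Yp True False w, Yp False True w, Yp False False w)
                        \<and> G (Mp True w, Mp False w)) \<omega>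
     = cP (\<lambda>w. F (Yp True True w, Yp True False w, Yp False True w, Yp False False w)) \<omega>
       * cP (\<lambda>w. G (Mp True w, Mp False w)) \<omega>"
  using cond_indep_ev_conj[OF mediator_indep] .

text \<open>Within the arm \<open>A = a\<close>, consistency turns the observed events into events of the
  potential outcomes, and (A3) lets the factor \<open>P(A = a | X)\<close> cancel.\<close>

lemma cprob_given_arm:
  assumes "\<And>w. w \<in> space M \<Longrightarrow> A w = a \<Longrightarrow> E w \<and> B w \<longleftrightarrow> R (potential w)"
    and "\<And>w. w \<in> space M \<Longrightarrow> A w = a \<Longrightarrow> B w \<longleftrightarrow> Q (potential w)"
    and "AE \<omega> in M. cP (\<lambda>w. A w = a) \<omega> \<noteq> 0"
  shows "AE \<omega> in M. cprob_given M X (ev M E) (ev M (\<lambda>w. A w = a \<and> B w)) \<omega>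
           = cP (\<lambda>w. R (potential w)) \<omega> / cP (\<lambda>w. Q (potential w)) \<omega>"
proof -
  have events: "ev M E \<inter> ev M (\<lambda>w. A w = a \<and> B w) = ev M (\<lambda>w. A w = a \<and> R (potential w))"
      "ev M (\<lambda>w. A w = a \<and> B w) = ev M (\<lambda>w. A w = a \<and> Q (potential w))"
    using assms(1,2) by (auto simp: ev_def)
  from cP_arm_factorizes[of a R] cP_arm_factorizes[of a Q] assms(3) show ?thesis
    unfolding cprob_given_def events(1) unfolding events(2) by eventually_elim simp
qed

lemma cprob_given_arm_only:
  assumes "\<And>w. w \<in> space M \<Longrightarrow> A w = a \<Longrightarrow> E w \<longleftrightarrow> R (potential w)"
    and "AE \<omega> in M. cP (\<lambda>w. A w = a) \<omega> \<noteq> 0"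
  shows "AE \<omega> in M. cprob_given M X (ev M E) (ev M (\<lambda>w. A w = a)) \<omega> = cP (\<lambda>w. R (potential w)) \<omega>"
proof -
  have "ev M (\<lambda>w. True) = space M"
    by (simp add: ev_def)
  with cprob_given_arm[of a E "\<lambda>_. True" R "\<lambda>_. True"] assms cprob_space[OF meas_X] show ?thesis
    by auto
qed

lemma cP_treated_mediator:
  "AE \<omega> in M. cP (\<lambda>w. A w \<and> Mo w) \<omega> = cP A \<omega> * cP (Mp True) \<omega>"
proof -
  have "ev M (\<lambda>w. A w \<and> Mo w) = ev M (\<lambda>w. A w \<and> Mp True w)"
    by (rule ev_cong) (auto simp: observed_eq_potential)
  then show ?thesis
    using cP_arm_factorizes[of True "\<lambda>(_, _, _, _, m1, _). m1"] by simp
qed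

lemma cP_treated_no_mediator:
  "AE \<omega> in M. cP (\<lambda>w. A w \<and> \<not> Mo w) \<omega> = cP A \<omega> * cP (\<lambda>w. \<not> Mp True w) \<omega>"
proof -
  have "ev M (\<lambda>w. A w \<and> \<not> Mo w) = ev M (\<lambda>w. A w \<and> \<not> Mp True w)"
    by (rule ev_cong) (auto simp: observed_eq_potential)
  then show ?thesis
    using cP_arm_factorizes[of True "\<lambda>(_, _, _, _, m1, _). \<not> m1"] by simp
qed

lemma cP_untreated_mediator:
  "AE \<omega> in M. cP (\<lambda>w. \<not> A w \<and> Mo w) \<omega> = cP (\<lambda>w. \<not> A w) \<omega> * cP (Mp False) \<omega>"
proof -
  have "ev M (\<lambda>w. \<not> A w \<and> Mo w) = ev M (\<lambda>w. \<not> A w \<and> Mp False w)"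
    by (rule ev_cong) (auto simp: observed_eq_potential)
  then show ?thesis
    using cP_arm_factorizes[of False "\<lambda>(_, _, _, _, _, m0). m0"] by simp
qed

text \<open>By monotonicity, \<open>Y(1,M(0)) = 0\<close> and \<open>Y(1,M(1)) = 1\<close> hold exactly for the units with
  \<open>M(1) = 1, M(0) = 0, Y(1,1) = 1, Y(1,0) = 0\<close>, and these also have \<open>Y(0,M(0)) = 0\<close>.\<close>

lemma indirect_causation_eq:
  "cprob_given M X
     (ev M (\<lambda>w. \<not> Yp True (Mp False w) w \<and> \<not> Yp False (Mp False w) w))
     (ev M (\<lambda>w. Yp True (Mp True w) w)) \<omega>
   = cP (\<lambda>w. (Yp True True w \<and> \<not> Yp True False w) \<and> (Mp True w \<and> \<not> Mp False w)) \<omega> / cP Y1 \<omega>"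
proof -
  have "ev M (\<lambda>w. \<not> Yp True (Mp False w) w \<and> \<not> Yp False (Mp False w) w) \<inter> ev M Y1
      = ev M (\<lambda>w. (Yp True True w \<and> \<not> Yp True False w) \<and> (Mp True w \<and> \<not> Mp False w))"
    unfolding ev_conj Y1_def
    by (rule ev_cong) (use monotone in \<open>auto simp: Yp_Mp_cases\<close>)
  moreover have "ev M (\<lambda>w. Yp True (Mp True w) w) = ev M Y1"
    by (simp add: Y1_def[abs_def])
  ultimately show ?thesis
    unfolding cprob_given_def by simp
qed

lemma direct_causation_eq:
  "cprob_given M X
     (ev M (\<lambda>w. Yp True (Mp False w) w \<and> \<not> Yp False (Mp False w) w))
     (ev M (\<lambda>w. Yp True (Mp True w) w)) \<omega>
   = cP (\<lambda>w. Y1M0 w \<and> \<not> Y0 w) \<omega> / cP Y1 \<omega>"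
proof -
  have "ev M (\<lambda>w. Yp True (Mp False w) w \<and> \<not> Yp False (Mp False w) w) \<inter> ev M Y1
      = ev M (\<lambda>w. Y1M0 w \<and> \<not> Y0 w)"
    unfolding ev_conj Y1_def Y0_def Y1M0_def
    by (rule ev_cong) (use monotone in \<open>auto simp: Yp_Mp_cases\<close>)
  moreover have "ev M (\<lambda>w. Yp True (Mp True w) w) = ev M Y1"
    by (simp add: Y1_def[abs_def])
  ultimately show ?thesis
    unfolding cprob_given_def by simp
qed

lemma cP_Y11_split:
  "AE \<omega> in M. cP (Yp True True) \<omega>
     = cP (\<lambda>w. Yp True True w \<and> \<not> Yp True False w) \<omega> + cP (Yp True False) \<omega>"
  by (rule cP_disjoint, measurable, measurable) (use monotone in auto)

lemma cP_M1_split: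
  "AE \<omega> in M. cP (Mp True) \<omega> = cP (\<lambda>w. Mp True w \<and> \<not> Mp False w) \<omega> + cP (Mp False) \<omega>"
  by (rule cP_disjoint, measurable, measurable) (use monotone in auto)

lemma cP_Y1_split:
  "AE \<omega> in M. cP Y1 \<omega>
     = cP (\<lambda>w. (Yp True True w \<and> \<not> Yp True False w) \<and> (Mp True w \<and> \<not> Mp False w)) \<omega>
       + cP Y1M0 \<omega>"
  by (rule cP_disjoint, measurable, measurable)
    (use monotone in \<open>auto simp: Y1_def Y1M0_def Yp_Mp_cases\<close>)

lemma cP_complier_effect_factorizes:
  "AE \<omega> in M. cP (\<lambda>w. (Yp True True w \<and> \<not> Yp True False w) \<and> (Mp True w \<and> \<not> Mp False w)) \<omega>
     = cP (\<lambda>w. Yp True True w \<and> \<not> Yp True False w) \<omega> * cP (\<lambda>w. Mp True w \<and> \<not> Mp False w) \<omega>"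
  using cP_mediator_factorizes[of "\<lambda>(y11, y10, _, _). y11 \<and> \<not> y10" "\<lambda>(m1, m0). m1 \<and> \<not> m0"]
  by simp

lemma cP_Y1M0_split: "AE \<omega> in M. cP Y1M0 \<omega> = cP (\<lambda>w. Y1M0 w \<and> \<not> Y0 w) \<omega> + cP Y0 \<omega>"
  by (rule cP_disjoint, measurable, measurable)
    (use monotone in \<open>auto simp: Y0_def Y1M0_def Yp_Mp_cases\<close>)

lemma cP_Y1_lower_bound: "AE \<omega> in M. cP Y1 \<omega> \<ge> cP (Yp True True) \<omega> * cP (Mp True) \<omega>"
proof -
  have "AE \<omega> in M. cP Y1 \<omega>
      = cP (\<lambda>w. Yp True True w \<and> Mp True w) \<omega> + cP (\<lambda>w. Yp True False w \<and> \<not> Mp True w) \<omega>"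
    by (rule cP_disjoint, measurable, measurable) (auto simp: Y1_def Yp_Mp_cases)
  moreover have "AE \<omega> in M. cP (\<lambda>w. Yp True False w \<and> \<not> Mp True w) \<omega> \<ge> 0"
    by (rule cP_nonneg) measurable
  ultimately show ?thesis
    using cP_mediator_factorizes[of "\<lambda>(y11, _, _, _). y11" "\<lambda>(m1, _). m1"]
    by eventually_elim simp
qed

end

locale positive_mediation_model = mediation_model +
  assumes pos_treated_mediator: "AE \<omega> in M. cP (\<lambda>w. A w \<and> Mo w) \<omega> > 0"
    and pos_treated_no_mediator: "AE \<omega> in M. cP (\<lambda>w. A w \<and> \<not> Mo w) \<omega> > 0"
    and pos_untreated_mediator: "AE \<omega> in M. cP (\<lambda>w. \<not> A w \<and> Mo w) \<omega> > 0"
    and pos_outcome: "AE \<omega> in M. cprob_given M X (ev M Y) (ev M (\<lambda>w. A w \<and> Mo w)) \<omega> > 0"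
begin

lemma cP_treated_M1_positive:
  "AE \<omega> in M. cP A \<omega> > 0 \<and> cP (Mp True) \<omega> > 0"
proof -
  have "AE \<omega> in M. cP A \<omega> \<ge> 0" "AE \<omega> in M. cP (Mp True) \<omega> \<ge> 0"
    by (rule cP_nonneg, measurable)+
  with pos_treated_mediator cP_treated_mediator show ?thesis
    by eventually_elim (auto simp: zero_less_mult_iff)
qed

lemma cP_treated_nonzero: "AE \<omega> in M. cP A \<omega> \<noteq> 0"
  using cP_treated_M1_positive by eventually_elim simp

lemma cP_M1_nonzero: "AE \<omega> in M. cP (Mp True) \<omega> \<noteq> 0"
  using cP_treated_M1_positive by eventually_elim simp

lemma cP_untreated_nonzero: "AE \<omega> in M. cP (\<lambda>w. \<not> A w) \<omega> \<noteq> 0"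
  using pos_untreated_mediator cP_untreated_mediator by eventually_elim auto

lemma cP_not_M1_nonzero: "AE \<omega> in M. cP (\<lambda>w. \<not> Mp True w) \<omega> \<noteq> 0"
  using pos_treated_no_mediator cP_treated_no_mediator by eventually_elim auto

lemma mu11_identified:
  "AE \<omega> in M. cprob_given M X (ev M Y) (ev M (\<lambda>w. A w \<and> Mo w)) \<omega> = cP (Yp True True) \<omega>"
proof -
  have "AE \<omega> in M. cprob_given M X (ev M Y) (ev M (\<lambda>w. A w \<and> Mo w)) \<omega>
      = cP (\<lambda>w. Yp True True w \<and> Mp True w) \<omega> / cP (Mp True) \<omega>"
    by (rule cprob_given_arm[of True Y Mo "\<lambda>(y11, _, _, _, m1, _). y11 \<and> m1"
          "\<lambda>(_, _, _, _, m1, _). m1", simplified])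
      (use cP_treated_nonzero in \<open>auto simp: observed_eq_potential\<close>)
  with cP_mediator_factorizes[of "\<lambda>(y11, _, _, _). y11" "\<lambda>(m1, _). m1"] cP_M1_nonzero
  show ?thesis
    by eventually_elim simp
qed

lemma mu10_identified:
  "AE \<omega> in M. cprob_given M X (ev M Y) (ev M (\<lambda>w. A w \<and> \<not> Mo w)) \<omega> = cP (Yp True False) \<omega>"
proof -
  have "AE \<omega> in M. cprob_given M X (ev M Y) (ev M (\<lambda>w. A w \<and> \<not> Mo w)) \<omega>
      = cP (\<lambda>w. Yp True False w \<and> \<not> Mp True w) \<omega> / cP (\<lambda>w. \<not> Mp True w) \<omega>"
    by (rule cprob_given_arm[of True Y "\<lambda>w. \<not> Mo w" "\<lambda>(_, y10, _, _, m1, _). y10 \<and> \<not> m1"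
          "\<lambda>(_, _, _, _, m1, _). \<not> m1", simplified])
      (use cP_treated_nonzero in \<open>auto simp: observed_eq_potential\<close>)
  with cP_mediator_factorizes[of "\<lambda>(_, y10, _, _). y10" "\<lambda>(m1, _). \<not> m1"] cP_not_M1_nonzero
  show ?thesis
    by eventually_elim simp
qed

lemma gamma1_identified:
  "AE \<omega> in M. cprob_given M X (ev M Mo) (ev M A) \<omega> = cP (Mp True) \<omega>"
  by (rule cprob_given_arm_only[of True Mo "\<lambda>(_, _, _, _, m1, _). m1", simplified])
    (use cP_treated_nonzero in \<open>auto simp: observed_eq_potential\<close>)

lemma gamma0_identified:
  "AE \<omega> in M. cprob_given M X (ev M Mo) (ev M (\<lambda>w. \<not> A w)) \<omega> = cP (Mp False) \<omega>"
  by (rule cprob_given_arm_only[of False Mo "\<lambda>(_, _, _, _, _, m0). m0", simplified])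
    (use cP_untreated_nonzero in \<open>auto simp: observed_eq_potential\<close>)

lemma mu1_identified:
  "AE \<omega> in M. cprob_given M X (ev M Y) (ev M A) \<omega> = cP Y1 \<omega>"
  unfolding ev_Y1 by (rule cprob_given_arm_only[of True Y "\<lambda>(y11, y10, _, _, m1, _). m1 \<and> y11 \<or> \<not> m1 \<and> y10",
        simplified])
    (use cP_treated_nonzero in \<open>auto simp: observed_eq_potential\<close>)

lemma mu0_identified:
  "AE \<omega> in M. cprob_given M X (ev M Y) (ev M (\<lambda>w. \<not> A w)) \<omega> = cP Y0 \<omega>"
  unfolding ev_Y0 by (rule cprob_given_arm_only[of False Y "\<lambda>(_, _, y01, y00, _, m0). m0 \<and> y01 \<or> \<not> m0 \<and> y00",
        simplified])
    (use cP_untreated_nonzero in \<open>auto simp: observed_eq_potential\<close>)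

lemma mediator_given_outcome_identified:
  "AE \<omega> in M. cprob_given M X (ev M Mo) (ev M (\<lambda>w. A w \<and> Y w)) \<omega>
     = cP (Yp True True) \<omega> * cP (Mp True) \<omega> / cP Y1 \<omega>"
proof -
  have "AE \<omega> in M. cprob_given M X (ev M Mo) (ev M (\<lambda>w. A w \<and> Y w)) \<omega>
      = cP (\<lambda>w. Yp True True w \<and> Mp True w) \<omega>
        / cP (\<lambda>w. Mp True w \<and> Yp True True w \<or> \<not> Mp True w \<and> Yp True False w) \<omega>"
    by (rule cprob_given_arm[of True Mo Y "\<lambda>(y11, _, _, _, m1, _). y11 \<and> m1"
          "\<lambda>(y11, y10, _, _, m1, _). m1 \<and> y11 \<or> \<not> m1 \<and> y10", simplified])
      (use cP_treated_nonzero in \<open>auto simp: observed_eq_potential\<close>)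
  with cP_mediator_factorizes[of "\<lambda>(y11, _, _, _). y11" "\<lambda>(m1, _). m1"] show ?thesis
    by eventually_elim (simp add: ev_Y1)
qed

lemma cP_Y11_positive: "AE \<omega> in M. cP (Yp True True) \<omega> > 0"
  using pos_outcome mu11_identified by eventually_elim simp

end

theorem proposition10:
  fixes M :: "'a measure"
    and X :: "'a \<Rightarrow> real ^ 'd"
    and A Mo Y :: "'a \<Rightarrow> bool"
    and Yp :: "bool \<Rightarrow> bool \<Rightarrow> 'a \<Rightarrow> bool"   (* Yp a m = Y(a,m) *)
    and Mp :: "bool \<Rightarrow> 'a \<Rightarrow> bool"           (* Mp a = M(a) *)
  assumes prob: "prob_space M"
    and meas_X: "X \<in> borel_measurable M"
    and meas_A: "A \<in> measurable M (count_space UNIV)"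
    and meas_Mo: "Mo \<in> measurable M (count_space UNIV)"
    and meas_Y: "Y \<in> measurable M (count_space UNIV)"
    and meas_Yp: "\<And>a m. Yp a m \<in> measurable M (count_space UNIV)"
    and meas_Mp: "\<And>a. Mp a \<in> measurable M (count_space UNIV)"
    (* (A1) consistency *)
    and A1_Y: "\<And>\<omega> a m. \<omega> \<in> space M \<Longrightarrow> A \<omega> = a \<Longrightarrow> Mo \<omega> = m \<Longrightarrow> Y \<omega> = Yp a m \<omega>"
    and A1_M: "\<And>\<omega> a. \<omega> \<in> space M \<Longrightarrow> A \<omega> = a \<Longrightarrow> Mo \<omega> = Mp a \<omega>"
    (* (A2) monotonicity *)
    and A2: "\<And>\<omega>. \<omega> \<in> space M \<Longrightarrow>
               Yp True False \<omega> \<le> Yp True True \<omega> \<and> Yp False False \<omega> \<le> Yp True False \<omega>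
             \<and> Yp False True \<omega> \<le> Yp True True \<omega> \<and> Mp False \<omega> \<le> Mp True \<omega>"
    (* (A3) *)
    and A3: "cond_indep M X A
               (\<lambda>\<omega>. (Yp True True \<omega>, Yp True False \<omega>, Yp False True \<omega>, Yp False False \<omega>,
                      Mp True \<omega>, Mp False \<omega>))"
    (* (A4) *)
    and A4: "cond_indep M X
               (\<lambda>\<omega>. (Yp True True \<omega>, Yp True False \<omega>, Yp False True \<omega>, Yp False False \<omega>))
               (\<lambda>\<omega>. (Mp True \<omega>, Mp False \<omega>))"
    (* (A5), (A6) with a common epsilon *)
    and A56: "\<exists>\<epsilon>>0.
               (AE \<omega> in M. \<forall>a m. cprob M X (ev M (\<lambda>w. A w = a \<and> Mo w = m)) \<omega> \<ge> \<epsilon>)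
             \<and> (AE \<omega> in M. cprob_given M X (ev M Y) (ev M (\<lambda>w. A w \<and> Mo w)) \<omega> \<ge> \<epsilon>)"
  shows "AE \<omega> in M.
     (let
        \<mu>\<^sub>1\<^sub>1 = cprob_given M X (ev M Y) (ev M (\<lambda>w. A w \<and> Mo w)) \<omega>;
        \<mu>\<^sub>1\<^sub>0 = cprob_given M X (ev M Y) (ev M (\<lambda>w. A w \<and> \<not> Mo w)) \<omega>;
        \<gamma>\<^sub>1 = cprob_given M X (ev M Mo) (ev M (\<lambda>w. A w)) \<omega>;
        \<gamma>\<^sub>0 = cprob_given M X (ev M Mo) (ev M (\<lambda>w. \<not> A w)) \<omega>;
        \<mu>\<^sub>1 = cprob_given M X (ev M Y) (ev M (\<lambda>w. A w)) \<omega>;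
        \<mu>\<^sub>0 = cprob_given M X (ev M Y) (ev M (\<lambda>w. \<not> A w)) \<omega>;
        pM = cprob_given M X (ev M Mo) (ev M (\<lambda>w. A w \<and> Y w)) \<omega>;
        \<alpha> = cprob_given M X
               (ev M (\<lambda>w. \<not> Yp True (Mp False w) w \<and> \<not> Yp False (Mp False w) w))
               (ev M (\<lambda>w. Yp True (Mp True w) w)) \<omega>;
        \<beta> = cprob_given M X
               (ev M (\<lambda>w. Yp True (Mp False w) w \<and> \<not> Yp False (Mp False w) w))
               (ev M (\<lambda>w. Yp True (Mp True w) w)) \<omega>
      in \<alpha> = (1 - \<mu>\<^sub>1\<^sub>0 / \<mu>\<^sub>1\<^sub>1) * (1 - \<gamma>\<^sub>0 / \<gamma>\<^sub>1) * pM
       \<and> \<beta> = (1 - \<mu>\<^sub>0 / \<mu>\<^sub>1) - \<alpha>)"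
proof -
  obtain \<epsilon> :: real where "\<epsilon> > 0"
    and A5: "AE \<omega> in M. \<forall>a m. cprob M X (ev M (\<lambda>w. A w = a \<and> Mo w = m)) \<omega> \<ge> \<epsilon>"
    and A6: "AE \<omega> in M. cprob_given M X (ev M Y) (ev M (\<lambda>w. A w \<and> Mo w)) \<omega> \<ge> \<epsilon>"
    using A56 by blast
  have arm_positive: "AE \<omega> in M. cprob M X (ev M (\<lambda>w. A w = a \<and> Mo w = m)) \<omega> > 0" for a m
    using A5 by eventually_elim (use \<open>\<epsilon> > 0\<close> in \<open>blast intro: less_le_trans\<close>)
  have outcome_positive: "AE \<omega> in M. cprob_given M X (ev M Y) (ev M (\<lambda>w. A w \<and> Mo w)) \<omega> > 0"
    using A6 by eventually_elim (use \<open>\<epsilon> > 0\<close> in linarith)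
  interpret positive_mediation_model M X A Mo Y Yp Mp
    using prob meas_X meas_A meas_Mo meas_Y meas_Yp meas_Mp A1_Y A1_M A2 A3 A4 outcome_positive
      arm_positive[of True True] arm_positive[of True False] arm_positive[of False True]
    by (simp add: positive_mediation_model_def positive_mediation_model_axioms_def
        mediation_model_def mediation_model_axioms_def)
  from mu11_identified mu10_identified gamma1_identified gamma0_identified
    mu1_identified mu0_identified mediator_given_outcome_identified
    cP_complier_effect_factorizes cP_Y11_positive cP_treated_M1_positive cP_Y1_lower_bound
    cP_Y11_split cP_M1_split cP_Y1_split cP_Y1M0_split
  show ?thesis
  proof eventually_elim
    case (elim \<omega>)
    show ?case
      unfolding Let_def indirect_causation_eq direct_causation_eq elim(1-8)
      by (intro conjI mediation_formula_algebra) (use elim in simp_all)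
  qed
qed

end
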